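(* Let $(P,\preceq)$ be a poset, $\mathcal{X}:=\{X\subseteq P\mid (X,\preceq)\text{ well-ordered}\}$, and $\Lambda$ a set. The $\Lambda$-system algebra of causal systems over $\mathcal{X}$ is a composition-order invariant functional $\Lambda$-system algebra over $\mathcal{X}$; in particular its set of systems is closed under parallel composition and interface connection.
   Context: $\mathcal{X}^{\mathcal{I}}$ is the set of functions $\mathcal{I}\to\mathcal{X}$; $\mathbin{\triangle}$ is symmetric difference; $x\prec y$ means $x\preceq y$, $x\ne y$. For finite disjoint $\mathcal{I},\mathcal{O}\subseteq\Lambda$, a causal $(\mathcal{I},\mathcal{O})$-system over $\mathcal{X}$ is a function $s:\mathcal{X}^{\mathcal{I}}\to\mathcal{X}^{\mathcal{O}}$ such that for all $\mathbf{X},\mathbf{X}'$, $o\in\mathcal{O}$, $y\in s(\mathbf{X})(o)\mathbin{\triangle}s(\mathbf{X}')(o)$ there exist $i\in\mathcal{I}$, $x\in\mathbf{X}(i)\mathbin{\triangle}\mathbf{X}'(i)$ with $x\prec y$. The $\Lambda$-system algebra of causal systems has as systems all causal $(\mathcal{I},\mathcal{O})$-systems for finite disjoint $\mathcal{I},\mathcal{O}\subseteq\Lambda$, with $\lambda(s)=\mathcal{I}\cup\mathcal{O}$, $\Gamma(s)=\{\{i,o\}\mid i\in\mathcal{I},o\in\mathcal{O}\}$, parallel composition $(s_1\parallel s_2)(\mathbf{X})(o_j)=s_j(\mathbf{X}|_{\mathcal{I}_j})(o_j)$ for $s_j$ with index sets $\mathcal{I}_j,\mathcal{O}_j$ ($j=1,2$,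 all four pairwise disjoint), and interface connection $\gamma_{i,o}(s)(\mathbf{X})=s(\mathbf{X}\cup\{(i,X^* )\})|_{\mathcal{O}\setminus\{o\}}$ for $\mathbf{X}\in\mathcal{X}^{\mathcal{I}\setminus\{i\}}$, where $X^*$ is the unique $X_i\in\mathcal{X}$ with $s(\mathbf{X}\cup\{(i,X_i)\})(o)=X_i$. Being a functional $\Lambda$-system algebra means that the set of systems is closed under $\parallel$ and $\gamma$ and $\{i,o\}\in\Gamma(s_1\parallel s_2)\iff\{i,o\}\in\Gamma(s_j)$ for $i,o\in\lambda(s_j)$ when $\lambda(s_1)\cap\lambda(s_2)=\emptyset$. Composition-order invariance means: (i) for all $s$, $\{i,o\}\in\Gamma(s)$, $\{i',o'\}\in\Gamma(\gamma_{i,o}(s))$: $\{i',o'\}\in\Gamma(s)$, $\{i,o\}\in\Gamma(\gamma_{i',o'}(s))$, and $\gamma_{i',o'}(\gamma_{i,o}(s))=\gamma_{i,o}(\gamma_{i',o'}(s))$; (ii) $\parallel$ is associative and commutative; (iii) $\gamma_{i,o}(s_1)\parallel s_2=\gamma_{i,o}(s_1\parallel s_2)$ whenever $\lambda(s_1)\cap\lambda(s_2)=\emptyset$ and $\{i,o\}\in\Gamma(s_1)$. *)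

theory Defs
  imports "HOL-Library.FuncSet"
begin

text \<open>The poset (P, \<preceq>) is a type of class order; \<open>\<prec>\<close> is \<open><\<close>.
  The value set is the set of all well-ordered subsets of P.\<close>

definition well_ordered_subset :: "'p::order set \<Rightarrow> bool" where
  "well_ordered_subset X \<longleftrightarrow>
     (\<forall>x\<in>X. \<forall>y\<in>X. x \<le> y \<or> y \<le> x) \<and>
     (\<forall>A. A \<subseteq> X \<longrightarrow> A \<noteq> {} \<longrightarrow> (\<exists>a\<in>A. \<forall>b\<in>A. a \<le> b))"

definition WO :: "'p::order set set" where
  "WO = {X. well_ordered_subset X}"

definition symdiff :: "'a set \<Rightarrow> 'a set \<Rightarrow> 'a set" where
  "symdiff A B = (A - B) \<union> (B - A)"

text \<open>A system is a triple (I, O, s) with s a function X^I \<rightarrow> X^O; elements of X^I are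
  represented as extensional functions on I (PiE), and s itself is extensional
  on X^I, so that equality of systems is equality of the mathematical functions.
  The label set \<Lambda> is the type 'l.\<close>

type_synonym ('l, 'p) sys = "'l set \<times> 'l set \<times> (('l \<Rightarrow> 'p set) \<Rightarrow> ('l \<Rightarrow> 'p set))"

definition Ins :: "('l, 'p) sys \<Rightarrow> 'l set" where "Ins s = fst s"
definition Outs :: "('l, 'p) sys \<Rightarrow> 'l set" where "Outs s = fst (snd s)"
definition fn :: "('l, 'p) sys \<Rightarrow> ('l \<Rightarrow> 'p set) \<Rightarrow> ('l \<Rightarrow> 'p set)" where "fn s = snd (snd s)"

abbreviation Inputs :: "'l set \<Rightarrow> ('l \<Rightarrow> 'p::order set) set" where
  "Inputs I \<equiv> PiE I (\<lambda>_. WO)"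

definition causal_system :: "('l, 'p::order) sys \<Rightarrow> bool" where
  "causal_system s \<longleftrightarrow>
     finite (Ins s) \<and> finite (Outs s) \<and> Ins s \<inter> Outs s = {} \<and>
     fn s \<in> extensional_funcset (Inputs (Ins s)) (Inputs (Outs s)) \<and>
     (\<forall>X\<in>Inputs (Ins s). \<forall>X'\<in>Inputs (Ins s). \<forall>ou\<in>Outs s.
        \<forall>y\<in>symdiff (fn s X ou) (fn s X' ou).
          \<exists>i\<in>Ins s. \<exists>x\<in>symdiff (X i) (X' i). x < y)"

definition causal_systems :: "('l, 'p::order) sys set" where
  "causal_systems = {s. causal_system s}"

definition lam :: "('l, 'p) sys \<Rightarrow> 'l set" where
  "lam s = Ins s \<union> Outs s"

definition Gam :: "('l, 'p) sys \<Rightarrow> 'l set set" where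
  "Gam s = {{i, ou} | i ou. i \<in> Ins s \<and> ou \<in> Outs s}"

definition par :: "('l, 'p::order) sys \<Rightarrow> ('l, 'p) sys \<Rightarrow> ('l, 'p) sys" where
  "par s1 s2 =
     (Ins s1 \<union> Ins s2, Outs s1 \<union> Outs s2,
      \<lambda>X. if X \<in> Inputs (Ins s1 \<union> Ins s2) then
             (\<lambda>l. if l \<in> Outs s1 then fn s1 (restrict X (Ins s1)) l
                  else if l \<in> Outs s2 then fn s2 (restrict X (Ins s2)) l
                  else undefined)
           else undefined)"

definition fixval :: "('l, 'p::order) sys \<Rightarrow> 'l \<Rightarrow> 'l \<Rightarrow> ('l \<Rightarrow> 'p set) \<Rightarrow> 'p set" where
  "fixval s i ou X = (THE Xi. Xi \<in> WO \<and> fn s (X(i := Xi)) ou = Xi)"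

definition gamma :: "('l, 'p::order) sys \<Rightarrow> 'l \<Rightarrow> 'l \<Rightarrow> ('l, 'p) sys" where
  "gamma s i ou =
     (Ins s - {i}, Outs s - {ou},
      \<lambda>X. if X \<in> Inputs (Ins s - {i}) then
             restrict (fn s (X(i := fixval s i ou X))) (Outs s - {ou})
           else undefined)"

definition conn :: "('l, 'p::order) sys \<Rightarrow> 'l set \<Rightarrow> ('l, 'p) sys" where
  "conn s e = gamma s (THE i. i \<in> e \<and> i \<in> Ins s) (THE ou. ou \<in> e \<and> ou \<in> Outs s)"

definition connection_well_defined :: "('l, 'p::order) sys set \<Rightarrow> bool" where
  "connection_well_defined S \<longleftrightarrow>
     (\<forall>s\<in>S. \<forall>i\<in>Ins s. \<forall>ou\<in>Outs s. \<forall>X\<in>Inputs (Ins s - {i}).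
        \<exists>!Xi. Xi \<in> WO \<and> fn s (X(i := Xi)) ou = Xi)"

definition functional_system_algebra ::
  "'s set \<Rightarrow> ('s \<Rightarrow> 'l set) \<Rightarrow> ('s \<Rightarrow> 'l set set) \<Rightarrow> ('s \<Rightarrow> 's \<Rightarrow> 's) \<Rightarrow> ('s \<Rightarrow> 'l set \<Rightarrow> 's) \<Rightarrow> bool" where
  "functional_system_algebra S lm \<Gamma> p c \<longleftrightarrow>
     (\<forall>s1\<in>S. \<forall>s2\<in>S. lm s1 \<inter> lm s2 = {} \<longrightarrow> p s1 s2 \<in> S) \<and>
     (\<forall>s\<in>S. \<forall>e\<in>\<Gamma> s. c s e \<in> S) \<and>
     (\<forall>s1\<in>S. \<forall>s2\<in>S. lm s1 \<inter> lm s2 = {} \<longrightarrow>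
        (\<forall>i ou. i \<in> lm s1 \<and> ou \<in> lm s1 \<longrightarrow> ({i, ou} \<in> \<Gamma> (p s1 s2) \<longleftrightarrow> {i, ou} \<in> \<Gamma> s1)) \<and>
        (\<forall>i ou. i \<in> lm s2 \<and> ou \<in> lm s2 \<longrightarrow> ({i, ou} \<in> \<Gamma> (p s1 s2) \<longleftrightarrow> {i, ou} \<in> \<Gamma> s2)))"

definition composition_order_invariant ::
  "'s set \<Rightarrow> ('s \<Rightarrow> 'l set) \<Rightarrow> ('s \<Rightarrow> 'l set set) \<Rightarrow> ('s \<Rightarrow> 's \<Rightarrow> 's) \<Rightarrow> ('s \<Rightarrow> 'l set \<Rightarrow> 's) \<Rightarrow> bool" where
  "composition_order_invariant S lm \<Gamma> p c \<longleftrightarrow>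
     (\<forall>s\<in>S. \<forall>e\<in>\<Gamma> s. \<forall>e'\<in>\<Gamma> (c s e).
        e' \<in> \<Gamma> s \<and> e \<in> \<Gamma> (c s e') \<and> c (c s e) e' = c (c s e') e) \<and>
     (\<forall>s1\<in>S. \<forall>s2\<in>S. \<forall>s3\<in>S.
        lm s1 \<inter> lm s2 = {} \<and> lm s1 \<inter> lm s3 = {} \<and> lm s2 \<inter> lm s3 = {} \<longrightarrow>
        p (p s1 s2) s3 = p s1 (p s2 s3)) \<and>
     (\<forall>s1\<in>S. \<forall>s2\<in>S. lm s1 \<inter> lm s2 = {} \<longrightarrow> p s1 s2 = p s2 s1) \<and>
     (\<forall>s1\<in>S. \<forall>s2\<in>S. \<forall>e\<in>\<Gamma> s1. lm s1 \<inter> lm s2 = {} \<longrightarrow>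
        p (c s1 e) s2 = c (p s1 s2) e)"

end

theory Submission
  imports Defs
begin

text \<open>Causality makes feedback well defined. For a causal map \<open>f\<close> on well-ordered sets, a
  maximal set that agrees with its image below each of its elements exists by Zorn's lemma and
  is a fixed point; two fixed points coincide, since the part of their symmetric difference that
  is not caused by other inputs is a subset of a well-ordered set without a minimal element.
  The same minimality argument shows that connecting an output to an input preserves
  causality, and uniqueness of fixed points makes the order of two connections irrelevant:
  both compute the simultaneous solution of the two feedback equations. The laws of parallel
  composition are bookkeeping with disjoint index sets.\<close>

lemma WO_chain: "D \<in> WO \<Longrightarrow> x \<in> D \<Longrightarrow> y \<in> D \<Longrightarrow> x \<le> y \<or> y \<le> x"
  unfolding WO_def well_ordered_subset_def by simp

lemma WO_least: "D \<in> WO \<Longrightarrow> S \<subseteq> D \<Longrightarrow> S \<noteq> {} \<Longrightarrow> \<exists>a\<in>S. \<forall>b\<in>S. a \<le> b"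
  unfolding WO_def well_ordered_subset_def by simp

lemma WOI:
  "(\<And>x y. x \<in> D \<Longrightarrow> y \<in> D \<Longrightarrow> x \<le> y \<or> y \<le> x) \<Longrightarrow>
   (\<And>S. S \<subseteq> D \<Longrightarrow> S \<noteq> {} \<Longrightarrow> \<exists>a\<in>S. \<forall>b\<in>S. a \<le> b) \<Longrightarrow> D \<in> WO"
  unfolding WO_def well_ordered_subset_def by simp

lemma WO_subset: "A \<in> WO \<Longrightarrow> B \<subseteq> A \<Longrightarrow> B \<in> WO"
  by (rule WOI) (auto dest: WO_chain WO_least)

lemma wfp_on_less_WO: "A \<in> WO \<Longrightarrow> wfp_on A (<)"
  unfolding wfp_on_iff_ex_minimal by (metis WO_least leD)

lemma wfp_on_less_Un:
  fixes A B :: "'a::preorder set"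
  assumes A: "wfp_on A (<)" and B: "wfp_on B (<)"
  shows "wfp_on (A \<union> B) (<)"
  unfolding wfp_on_iff_ex_minimal
proof (intro allI impI)
  fix S assume S: "S \<subseteq> A \<union> B" "S \<noteq> {}"
  show "\<exists>z\<in>S. \<forall>y. y < z \<longrightarrow> y \<notin> S"
  proof (cases "S \<inter> A = {}")
    case True
    then show ?thesis using B S unfolding wfp_on_iff_ex_minimal by blast
  next
    case False
    then obtain m where m: "m \<in> S \<inter> A" "\<forall>y. y < m \<longrightarrow> y \<notin> S \<inter> A"
      using A unfolding wfp_on_iff_ex_minimal by (meson inf_le2)
    show ?thesis
    proof (cases "{y \<in> S. y < m} = {}")
      case True
      then show ?thesis using m by blast
    next
      case False
      moreover have "{y \<in> S. y < m} \<subseteq> B" using S m by blast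
      ultimately obtain c where c: "c \<in> S" "c < m" "\<forall>y. y < c \<longrightarrow> y \<notin> {y \<in> S. y < m}"
        using B unfolding wfp_on_iff_ex_minimal by blast
      have "y \<notin> S" if "y < c" for y
        using c that order.strict_trans by blast
      then show ?thesis using c(1) by blast
    qed
  qed
qed

lemma symdiff_iff: "x \<in> symdiff A B \<longleftrightarrow> (x \<in> A \<longleftrightarrow> x \<notin> B)"
  unfolding symdiff_def by blast

lemma symdiff_self [simp]: "symdiff A A = {}"
  unfolding symdiff_def by blast

definition causal_map :: "('p::order set \<Rightarrow> 'p set) \<Rightarrow> bool" where
  "causal_map f \<longleftrightarrow> (\<forall>A\<in>WO. \<forall>B\<in>WO. \<forall>y\<in>symdiff (f A) (f B). \<exists>x\<in>symdiff A B. x < y)"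

lemma causal_map_agree:
  assumes "causal_map f" "A \<in> WO" "B \<in> WO" "\<And>x. x < y \<Longrightarrow> x \<in> A \<longleftrightarrow> x \<in> B"
  shows "y \<in> f A \<longleftrightarrow> y \<in> f B"
proof (rule ccontr)
  assume "\<not> (y \<in> f A \<longleftrightarrow> y \<in> f B)"
  then have "y \<in> symdiff (f A) (f B)" unfolding symdiff_iff by blast
  then obtain x where "x \<in> symdiff A B" "x < y" using assms(1-3) unfolding causal_map_def by blast
  then show False using assms(4) unfolding symdiff_iff by blast
qed

definition initial_subset :: "'p::order set \<Rightarrow> 'p set \<Rightarrow> bool" where
  "initial_subset A B \<longleftrightarrow> A \<subseteq> B \<and> (\<forall>b\<in>B. \<forall>a\<in>A. b \<le> a \<longrightarrow> b \<in> A)"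

definition consistent_prefix :: "('p::order set \<Rightarrow> 'p set) \<Rightarrow> 'p set \<Rightarrow> bool" where
  "consistent_prefix f A \<longleftrightarrow> A \<in> WO \<and> (\<forall>a\<in>A. \<forall>y\<le>a. y \<in> A \<longleftrightarrow> y \<in> f A)"

lemma initial_subset_Union_chain:
  assumes "\<And>A B. A \<in> C \<Longrightarrow> B \<in> C \<Longrightarrow> initial_subset A B \<or> initial_subset B A" "A \<in> C"
  shows "initial_subset A (\<Union>C)"
  using assms unfolding initial_subset_def by blast

lemma WO_Union_initial_chain:
  assumes WO: "C \<subseteq> WO"
    and chain: "\<And>A B. A \<in> C \<Longrightarrow> B \<in> C \<Longrightarrow> initial_subset A B \<or> initial_subset B A"
  shows "\<Union>C \<in> WO"
proof (rule WOI)
  have init: "initial_subset A (\<Union>C)" if "A \<in> C" for A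
    using chain that by (rule initial_subset_Union_chain)
  show total: "x \<le> y \<or> y \<le> x" if xy: "x \<in> \<Union>C" "y \<in> \<Union>C" for x y
  proof -
    obtain A B where AB: "A \<in> C" "B \<in> C" "x \<in> A" "y \<in> B" using xy by blast
    then have "x \<in> B \<or> y \<in> A" using chain[OF AB(1,2)] unfolding initial_subset_def by blast
    then show ?thesis using AB WO by (meson WO_chain subsetD)
  qed
  show "\<exists>a\<in>S. \<forall>b\<in>S. a \<le> b" if S: "S \<subseteq> \<Union>C" "S \<noteq> {}" for S
  proof -
    obtain A where A: "A \<in> C" "S \<inter> A \<noteq> {}" using S by blast
    then obtain m where m: "m \<in> S \<inter> A" "\<forall>b\<in>S \<inter> A. m \<le> b"
      using WO_least[of A "S \<inter> A"] WO by blast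
    have "m \<le> b" if "b \<in> S" for b
    proof (rule ccontr)
      assume "\<not> m \<le> b"
      then have "b \<le> m" using total m S that by blast
      then have "b \<in> A" using init[OF A(1)] m S that unfolding initial_subset_def by blast
      then show False using m that \<open>\<not> m \<le> b\<close> by blast
    qed
    then show ?thesis using m by blast
  qed
qed

lemma consistent_prefix_Union_chain:
  assumes f: "causal_map f"
    and cons: "\<And>A. A \<in> C \<Longrightarrow> consistent_prefix f A"
    and chain: "\<And>A B. A \<in> C \<Longrightarrow> B \<in> C \<Longrightarrow> initial_subset A B \<or> initial_subset B A"
  shows "consistent_prefix f (\<Union>C)"
  unfolding consistent_prefix_def
proof (intro conjI ballI allI impI)
  have CWO: "C \<subseteq> WO" using cons unfolding consistent_prefix_def by blast
  show UWO: "\<Union>C \<in> WO" using CWO chain by (rule WO_Union_initial_chain)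
  fix a y assume a: "a \<in> \<Union>C" "y \<le> a"
  then obtain A where A: "A \<in> C" "a \<in> A" by blast
  have below: "x \<in> \<Union>C \<longleftrightarrow> x \<in> A" if "x \<le> a" for x
    using initial_subset_Union_chain[OF chain A(1)] A that unfolding initial_subset_def by blast
  have "y \<in> f (\<Union>C) \<longleftrightarrow> y \<in> f A"
    using f UWO by (rule causal_map_agree) (use CWO A a below in auto)
  moreover have "y \<in> A \<longleftrightarrow> y \<in> f A" using cons[OF A(1)] A a unfolding consistent_prefix_def by blast
  ultimately show "y \<in> \<Union>C \<longleftrightarrow> y \<in> f (\<Union>C)" using below a by blast
qed

text \<open>Adding the least element of \<open>f M - M\<close> keeps a consistent prefix consistent: by causality
  \<open>f\<close> does not notice the new element below it.\<close>
lemma consistent_prefix_extend: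
  assumes f: "causal_map f" and fWO: "f M \<in> WO" and M: "consistent_prefix f M" and neq: "f M \<noteq> M"
  obtains M' where "consistent_prefix f M'" "initial_subset M M'" "M' \<noteq> M"
proof -
  have MWO: "M \<in> WO" and sub: "M \<subseteq> f M" using M unfolding consistent_prefix_def by blast+
  obtain m where m: "m \<in> f M - M" "\<forall>b\<in>f M - M. m \<le> b"
    using WO_least[OF fWO, of "f M - M"] sub neq by blast
  have not_below: "\<not> m \<le> a" if "a \<in> M" for a
    using M that m unfolding consistent_prefix_def by blast
  define M' where "M' = insert m M"
  have M'WO: "M' \<in> WO" using WO_subset[OF fWO] sub m unfolding M'_def by blast
  have agree: "y \<in> f M' \<longleftrightarrow> y \<in> f M" if "\<not> m < y" for y
    by (rule causal_map_agree[OF f M'WO MWO]) (use that in \<open>auto simp: M'_def\<close>)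
  have "consistent_prefix f M'"
    unfolding consistent_prefix_def
  proof (intro conjI M'WO ballI allI impI)
    fix a y assume a: "a \<in> M'" "y \<le> a"
    show "y \<in> M' \<longleftrightarrow> y \<in> f M'"
    proof (cases "a \<in> M")
      case True
      then have "\<not> m < y" "y \<noteq> m" using not_below a(2) by (auto dest: less_imp_le order.trans)
      then show ?thesis using agree M True a unfolding consistent_prefix_def M'_def by blast
    next
      case False
      then have "a = m" using a unfolding M'_def by blast
      have "\<not> m < y" using a \<open>a = m\<close> by auto
      moreover have "y \<in> M \<longleftrightarrow> y \<in> f M" if "y \<noteq> m"
        using sub m that a \<open>a = m\<close> by force
      ultimately show ?thesis using agree m unfolding M'_def by blast
    qed
  qed
  moreover have "initial_subset M M'" unfolding initial_subset_def M'_def using not_below by blast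
  moreover have "M' \<noteq> M" using m unfolding M'_def by blast
  ultimately show ?thesis by (rule that)
qed

text \<open>A maximal consistent prefix, which exists by Zorn's lemma, is a fixed point.\<close>
theorem causal_map_has_fixpoint:
  assumes f: "causal_map f" and into: "\<And>A. A \<in> WO \<Longrightarrow> f A \<in> WO"
  obtains A where "A \<in> WO" "f A = A"
proof -
  let ?P = "{A. consistent_prefix f A}"
  have po: "partial_order_on ?P (relation_of initial_subset ?P)"
  proof (rule partial_order_on_relation_ofI)
    show "initial_subset A C" if "initial_subset A B" "initial_subset B C" for A B C
      using that unfolding initial_subset_def by (meson subsetD subset_trans)
  qed (auto simp: initial_subset_def)
  have "\<exists>U\<in>?P. \<forall>A\<in>C. initial_subset A U" if "C \<in> Chains (relation_of initial_subset ?P)" for C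
  proof -
    have cons: "consistent_prefix f A" and chain: "initial_subset A B \<or> initial_subset B A"
      if "A \<in> C" "B \<in> C" for A B
      using \<open>C \<in> Chains _\<close> that unfolding Chains_def relation_of_def by auto
    show ?thesis
      using consistent_prefix_Union_chain[OF f] initial_subset_Union_chain cons chain by blast
  qed
  from predicate_Zorn[OF po this] obtain M where
    M: "consistent_prefix f M" "\<And>A. consistent_prefix f A \<Longrightarrow> initial_subset M A \<Longrightarrow> A = M"
    by blast
  then have MWO: "M \<in> WO" unfolding consistent_prefix_def by blast
  have "f M = M"
  proof (rule ccontr)
    assume "f M \<noteq> M"
    then obtain M' where "consistent_prefix f M'" "initial_subset M M'" "M' \<noteq> M"
      using consistent_prefix_extend[OF f into[OF MWO] M(1)] by blast
    then show False using M(2) by blast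
  qed
  with MWO show ?thesis by (rule that)
qed

lemma sys_simps [simp]: "Ins (I, Os, f) = I" "Outs (I, Os, f) = Os" "fn (I, Os, f) = f"
  by (simp_all add: Ins_def Outs_def fn_def)

lemma causal_systems_iff: "s \<in> causal_systems \<longleftrightarrow> causal_system s"
  unfolding causal_systems_def by simp

lemma causal_system_finite: "causal_system s \<Longrightarrow> finite (Ins s) \<and> finite (Outs s)"
  by (simp add: causal_system_def)

lemma causal_system_disjoint: "causal_system s \<Longrightarrow> Ins s \<inter> Outs s = {}"
  by (simp add: causal_system_def)

lemma causal_system_fn_funcset:
  "causal_system s \<Longrightarrow> fn s \<in> Inputs (Ins s) \<rightarrow>\<^sub>E Inputs (Outs s)"
  by (simp add: causal_system_def)

lemma causal_system_fn_in_Inputs: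
  "causal_system s \<Longrightarrow> X \<in> Inputs (Ins s) \<Longrightarrow> fn s X \<in> Inputs (Outs s)"
  by (erule PiE_mem[OF causal_system_fn_funcset])

lemma causal_system_fn_in_WO:
  "causal_system s \<Longrightarrow> X \<in> Inputs (Ins s) \<Longrightarrow> ou \<in> Outs s \<Longrightarrow> fn s X ou \<in> WO"
  using causal_system_fn_in_Inputs by blast

lemma causal_systemD:
  assumes "causal_system s" "X \<in> Inputs (Ins s)" "X' \<in> Inputs (Ins s)" "ou \<in> Outs s"
    "y \<in> symdiff (fn s X ou) (fn s X' ou)"
  shows "\<exists>i\<in>Ins s. \<exists>x\<in>symdiff (X i) (X' i). x < y"
proof -
  have "\<forall>X\<in>Inputs (Ins s). \<forall>X'\<in>Inputs (Ins s). \<forall>ou\<in>Outs s.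
      \<forall>y\<in>symdiff (fn s X ou) (fn s X' ou). \<exists>i\<in>Ins s. \<exists>x\<in>symdiff (X i) (X' i). x < y"
    using assms(1) by (simp add: causal_system_def)
  then show ?thesis using assms(2-5) by blast
qed

lemma causal_systemI:
  assumes "finite (Ins s)" "finite (Outs s)" "Ins s \<inter> Outs s = {}"
    "\<And>X. X \<in> Inputs (Ins s) \<Longrightarrow> fn s X \<in> Inputs (Outs s)"
    "\<And>X. X \<notin> Inputs (Ins s) \<Longrightarrow> fn s X = undefined"
    "\<And>X X' ou y. X \<in> Inputs (Ins s) \<Longrightarrow> X' \<in> Inputs (Ins s) \<Longrightarrow> ou \<in> Outs s \<Longrightarrow>
       y \<in> symdiff (fn s X ou) (fn s X' ou) \<Longrightarrow> \<exists>i\<in>Ins s. \<exists>x\<in>symdiff (X i) (X' i). x < y"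
  shows "causal_system s"
  unfolding causal_system_def
proof (intro conjI ballI assms(1-3))
  show "fn s \<in> Inputs (Ins s) \<rightarrow>\<^sub>E Inputs (Outs s)"
    using assms(4,5) by (rule PiE_I)
  show "\<exists>i\<in>Ins s. \<exists>x\<in>symdiff (X i) (X' i). x < y"
    if "X \<in> Inputs (Ins s)" "X' \<in> Inputs (Ins s)" "ou \<in> Outs s"
      "y \<in> symdiff (fn s X ou) (fn s X' ou)" for X X' ou y
    using assms(6)[OF that] .
qed

lemma fun_upd_in_Inputs: "X \<in> Inputs (I - {i}) \<Longrightarrow> i \<in> I \<Longrightarrow> A \<in> WO \<Longrightarrow> X(i := A) \<in> Inputs I"
  using PiE_fun_upd[of A "\<lambda>_. WO" i X "I - {i}"] by (simp add: insert_absorb)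

lemma restrict_in_Inputs: "X \<in> Inputs B \<Longrightarrow> A \<subseteq> B \<Longrightarrow> restrict X A \<in> Inputs A"
  by (auto simp: PiE_iff)

text \<open>The differences on the feedback wire that lie above no difference of the other inputs form
  a subset of the well-ordered set \<open>Y i \<union> Y' i\<close> without a minimal element.\<close>
lemma causal_system_feedback_bound:
  assumes s: "causal_system s" and i: "i \<in> Ins s" and ou: "ou \<in> Outs s"
    and Y: "Y \<in> Inputs (Ins s)" "Y' \<in> Inputs (Ins s)"
    and feedback: "fn s Y ou = Y i" "fn s Y' ou = Y' i"
    and q: "q \<in> Outs s" and y: "y \<in> symdiff (fn s Y q) (fn s Y' q)"
  shows "\<exists>j\<in>Ins s - {i}. \<exists>x\<in>symdiff (Y j) (Y' j). x < y"
proof -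
  define good where "good z \<longleftrightarrow> (\<exists>j\<in>Ins s - {i}. \<exists>x\<in>symdiff (Y j) (Y' j). x < z)" for z
  have good_mono: "good z" if "good x" "x < z" for x z
    using that unfolding good_def by (meson order.strict_trans)
  have step: "good z \<or> (\<exists>x\<in>symdiff (Y i) (Y' i). x < z)"
    if qz: "q \<in> Outs s" "z \<in> symdiff (fn s Y q) (fn s Y' q)" for z q
  proof -
    obtain j x where "j \<in> Ins s" "x \<in> symdiff (Y j) (Y' j)" "x < z"
      using causal_systemD[OF s Y qz] by blast
    then show ?thesis unfolding good_def by (cases "j = i") auto
  qed
  define D where "D = {z \<in> symdiff (Y i) (Y' i). \<not> good z}"
  have "D = {}"
  proof (rule ccontr)
    assume "D \<noteq> {}"
    have "wfp_on (Y i \<union> Y' i) (<)"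
      using PiE_mem[OF Y(1) i] PiE_mem[OF Y(2) i] by (intro wfp_on_less_Un wfp_on_less_WO)
    moreover have "D \<subseteq> Y i \<union> Y' i" unfolding D_def symdiff_def by blast
    ultimately obtain z where z: "z \<in> D" "\<And>x. x < z \<Longrightarrow> x \<notin> D"
      using \<open>D \<noteq> {}\<close> unfolding wfp_on_iff_ex_minimal by blast
    have "z \<in> symdiff (fn s Y ou) (fn s Y' ou)" "\<not> good z"
      using z(1) feedback unfolding D_def by simp_all
    then obtain x where x: "x \<in> symdiff (Y i) (Y' i)" "x < z"
      using step[OF ou] by blast
    then have "\<not> good x" using good_mono \<open>\<not> good z\<close> by blast
    with x have "x \<in> D" unfolding D_def by blast
    then show False using z(2) x(2) by blast
  qed
  have "good x" if "x \<in> symdiff (Y i) (Y' i)" for x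
    using \<open>D = {}\<close> that unfolding D_def by blast
  then have "good y" using step[OF q y] good_mono by blast
  then show ?thesis unfolding good_def .
qed

lemma causal_system_fixpoint_unique:
  assumes s: "causal_system s" and i: "i \<in> Ins s" and ou: "ou \<in> Outs s"
    and X: "X \<in> Inputs (Ins s - {i})"
    and A: "A \<in> WO" "fn s (X(i := A)) ou = A" and B: "B \<in> WO" "fn s (X(i := B)) ou = B"
  shows "A = B"
proof -
  have "y \<notin> symdiff A B" for y
  proof
    assume y: "y \<in> symdiff A B"
    have "\<exists>j\<in>Ins s - {i}. \<exists>x\<in>symdiff ((X(i := A)) j) ((X(i := B)) j). x < y"
      using fun_upd_in_Inputs[OF X i A(1)] fun_upd_in_Inputs[OF X i B(1)]
      by (rule causal_system_feedback_bound[OF s i ou _ _ _ _ ou]) (simp_all add: A B y)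
    then show False by auto
  qed
  then show ?thesis unfolding symdiff_def by blast
qed

lemma causal_system_ex1_fixpoint:
  assumes s: "causal_system s" and i: "i \<in> Ins s" and ou: "ou \<in> Outs s"
    and X: "X \<in> Inputs (Ins s - {i})"
  shows "\<exists>!A. A \<in> WO \<and> fn s (X(i := A)) ou = A"
proof -
  have "causal_map (\<lambda>A. fn s (X(i := A)) ou)"
    unfolding causal_map_def
  proof (intro ballI)
    fix A B y assume AB: "A \<in> WO" "B \<in> WO"
      and y: "y \<in> symdiff (fn s (X(i := A)) ou) (fn s (X(i := B)) ou)"
    obtain j x where "j \<in> Ins s" "x \<in> symdiff ((X(i := A)) j) ((X(i := B)) j)" "x < y"
      using causal_systemD[OF s fun_upd_in_Inputs[OF X i AB(1)] fun_upd_in_Inputs[OF X i AB(2)] ou]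
        y by blast
    then show "\<exists>x\<in>symdiff A B. x < y" by (cases "j = i") auto
  qed
  moreover have "fn s (X(i := A)) ou \<in> WO" if "A \<in> WO" for A
    using causal_system_fn_in_WO[OF s fun_upd_in_Inputs[OF X i that] ou] .
  ultimately obtain A where "A \<in> WO" "fn s (X(i := A)) ou = A"
    by (rule causal_map_has_fixpoint)
  then show ?thesis using causal_system_fixpoint_unique[OF s i ou X] by blast
qed

lemma fixval_fixpoint:
  assumes "causal_system s" "i \<in> Ins s" "ou \<in> Outs s" "X \<in> Inputs (Ins s - {i})"
  shows "fixval s i ou X \<in> WO" "fn s (X(i := fixval s i ou X)) ou = fixval s i ou X"
  using theI'[OF causal_system_ex1_fixpoint[OF assms]] unfolding fixval_def by blast+

lemma fixval_eqI:
  assumes "causal_system s" "i \<in> Ins s" "ou \<in> Outs s" "X \<in> Inputs (Ins s - {i})"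
    "A \<in> WO" "fn s (X(i := A)) ou = A"
  shows "fixval s i ou X = A"
  using causal_system_fixpoint_unique[OF assms(1-4) fixval_fixpoint[OF assms(1-4)] assms(5,6)] .

lemma gamma_simps:
  "Ins (gamma s i ou) = Ins s - {i}" "Outs (gamma s i ou) = Outs s - {ou}"
  "fn (gamma s i ou) X = (if X \<in> Inputs (Ins s - {i}) then
     restrict (fn s (X(i := fixval s i ou X))) (Outs s - {ou}) else undefined)"
  unfolding gamma_def by simp_all

lemma causal_system_gamma:
  assumes s: "causal_system s" and i: "i \<in> Ins s" and ou: "ou \<in> Outs s"
  shows "causal_system (gamma s i ou)"
proof (rule causal_systemI)
  show "finite (Ins (gamma s i ou))" "finite (Outs (gamma s i ou))"
    "Ins (gamma s i ou) \<inter> Outs (gamma s i ou) = {}"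
    using causal_system_finite[OF s] causal_system_disjoint[OF s] by (auto simp: gamma_simps)
  show "fn (gamma s i ou) X \<in> Inputs (Outs (gamma s i ou))"
    if "X \<in> Inputs (Ins (gamma s i ou))" for X
  proof -
    have X: "X \<in> Inputs (Ins s - {i})" using that by (simp add: gamma_simps)
    have "X(i := fixval s i ou X) \<in> Inputs (Ins s)"
      using fun_upd_in_Inputs[OF X i fixval_fixpoint(1)[OF s i ou X]] .
    then have "fn s (X(i := fixval s i ou X)) \<in> Inputs (Outs s)"
      by (rule causal_system_fn_in_Inputs[OF s])
    then show ?thesis using X by (auto simp: gamma_simps PiE_iff)
  qed
  show "fn (gamma s i ou) X = undefined" if "X \<notin> Inputs (Ins (gamma s i ou))" for X
    using that by (simp add: gamma_simps)
  show "\<exists>j\<in>Ins (gamma s i ou). \<exists>x\<in>symdiff (X j) (X' j). x < y"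
    if X: "X \<in> Inputs (Ins (gamma s i ou))" "X' \<in> Inputs (Ins (gamma s i ou))"
      and q: "q \<in> Outs (gamma s i ou)"
      and y: "y \<in> symdiff (fn (gamma s i ou) X q) (fn (gamma s i ou) X' q)" for X X' q y
  proof -
    let ?Y = "X(i := fixval s i ou X)" and ?Y' = "X'(i := fixval s i ou X')"
    have X: "X \<in> Inputs (Ins s - {i})" "X' \<in> Inputs (Ins s - {i})"
      using X by (simp_all add: gamma_simps)
    have "\<exists>j\<in>Ins s - {i}. \<exists>x\<in>symdiff (?Y j) (?Y' j). x < y"
    proof (rule causal_system_feedback_bound[OF s i ou])
      show "?Y \<in> Inputs (Ins s)" "?Y' \<in> Inputs (Ins s)"
        using X by (intro fun_upd_in_Inputs i fixval_fixpoint(1)[OF s i ou]; simp)+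
      show "fn s ?Y ou = ?Y i" "fn s ?Y' ou = ?Y' i"
        using X fixval_fixpoint(2)[OF s i ou] by simp_all
      show "q \<in> Outs s" using q by (simp add: gamma_simps)
      show "y \<in> symdiff (fn s ?Y q) (fn s ?Y' q)"
        using X q y by (simp add: gamma_simps)
    qed
    then obtain j x where "j \<in> Ins s - {i}" "x \<in> symdiff (?Y j) (?Y' j)" "x < y"
      by blast
    then show ?thesis unfolding gamma_simps(1) by auto
  qed
qed

lemma par_simps:
  "Ins (par s1 s2) = Ins s1 \<union> Ins s2" "Outs (par s1 s2) = Outs s1 \<union> Outs s2"
  "fn (par s1 s2) X = (if X \<in> Inputs (Ins s1 \<union> Ins s2) then
     (\<lambda>l. if l \<in> Outs s1 then fn s1 (restrict X (Ins s1)) l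
          else if l \<in> Outs s2 then fn s2 (restrict X (Ins s2)) l
          else undefined)
   else undefined)"
  unfolding par_def by simp_all

lemma causal_system_par:
  assumes s1: "causal_system s1" and s2: "causal_system s2" and disj: "lam s1 \<inter> lam s2 = {}"
  shows "causal_system (par s1 s2)"
proof (rule causal_systemI)
  show "finite (Ins (par s1 s2))" "finite (Outs (par s1 s2))"
    "Ins (par s1 s2) \<inter> Outs (par s1 s2) = {}"
    using causal_system_finite[OF s1] causal_system_finite[OF s2] causal_system_disjoint[OF s1]
      causal_system_disjoint[OF s2] disj
    by (auto simp: par_simps lam_def)
  have restrict1: "restrict X (Ins s1) \<in> Inputs (Ins s1)"
    and restrict2: "restrict X (Ins s2) \<in> Inputs (Ins s2)"
    if "X \<in> Inputs (Ins (par s1 s2))" for X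
    using that unfolding par_simps(1) by (auto intro!: restrict_in_Inputs)
  show "fn (par s1 s2) X \<in> Inputs (Outs (par s1 s2))" if X: "X \<in> Inputs (Ins (par s1 s2))" for X
  proof (rule PiE_I)
    show "fn (par s1 s2) X l \<in> WO" if "l \<in> Outs (par s1 s2)" for l
      using X that causal_system_fn_in_WO[OF s1 restrict1[OF X]]
        causal_system_fn_in_WO[OF s2 restrict2[OF X]]
      by (auto simp: par_simps)
    show "fn (par s1 s2) X l = undefined" if "l \<notin> Outs (par s1 s2)" for l
      using X that by (simp add: par_simps)
  qed
  show "fn (par s1 s2) X = undefined" if "X \<notin> Inputs (Ins (par s1 s2))" for X
    using that by (simp add: par_simps)
  show "\<exists>i\<in>Ins (par s1 s2). \<exists>x\<in>symdiff (X i) (X' i). x < y"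
    if X: "X \<in> Inputs (Ins (par s1 s2))" "X' \<in> Inputs (Ins (par s1 s2))"
      and ou: "ou \<in> Outs (par s1 s2)"
      and y: "y \<in> symdiff (fn (par s1 s2) X ou) (fn (par s1 s2) X' ou)" for X X' ou y
  proof (cases "ou \<in> Outs s1")
    case True
    then have "y \<in> symdiff (fn s1 (restrict X (Ins s1)) ou) (fn s1 (restrict X' (Ins s1)) ou)"
      using y X by (simp add: par_simps)
    then obtain j x where
      "j \<in> Ins s1" "x \<in> symdiff (restrict X (Ins s1) j) (restrict X' (Ins s1) j)" "x < y"
      using causal_systemD[OF s1 restrict1[OF X(1)] restrict1[OF X(2)] True] by blast
    then show ?thesis by (auto simp: par_simps)
  next
    case False
    then have ou2: "ou \<in> Outs s2" using ou by (simp add: par_simps)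
    then have "y \<in> symdiff (fn s2 (restrict X (Ins s2)) ou) (fn s2 (restrict X' (Ins s2)) ou)"
      using y X False by (simp add: par_simps)
    then obtain j x where
      "j \<in> Ins s2" "x \<in> symdiff (restrict X (Ins s2) j) (restrict X' (Ins s2) j)" "x < y"
      using causal_systemD[OF s2 restrict2[OF X(1)] restrict2[OF X(2)] ou2] by blast
    then show ?thesis by (auto simp: par_simps)
  qed
qed

lemma Gam_iff: "e \<in> Gam s \<longleftrightarrow> (\<exists>i ou. e = {i, ou} \<and> i \<in> Ins s \<and> ou \<in> Outs s)"
  unfolding Gam_def by blast

lemma conn_doubleton:
  assumes "Ins s \<inter> Outs s = {}" "i \<in> Ins s" "ou \<in> Outs s"
  shows "conn s {i, ou} = gamma s i ou"
proof -
  have "(THE x. x \<in> {i, ou} \<and> x \<in> Ins s) = i" "(THE x. x \<in> {i, ou} \<and> x \<in> Outs s) = ou"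
    by (rule the_equality; use assms in auto)+
  then show ?thesis unfolding conn_def by simp
qed

lemma Gam_gamma: "Gam (gamma s i ou) = {{i', o'} | i' o'. i' \<in> Ins s - {i} \<and> o' \<in> Outs s - {ou}}"
  unfolding Gam_def by (simp add: gamma_simps)

lemma Gam_conn_cases:
  assumes s: "causal_system s" and e: "e \<in> Gam s"
  obtains i ou where "e = {i, ou}" "i \<in> Ins s" "ou \<in> Outs s" "conn s e = gamma s i ou"
  using e conn_doubleton[OF causal_system_disjoint[OF s]] unfolding Gam_iff by blast

lemma par_commute:
  assumes "Outs s1 \<inter> Outs s2 = {}"
  shows "par s1 s2 = par s2 s1"
  unfolding par_def using assms by (auto simp: fun_eq_iff Un_commute)

lemma par_assoc:
  assumes "Outs s1 \<inter> Outs s2 = {}" "Outs s1 \<inter> Outs s3 = {}" "Outs s2 \<inter> Outs s3 = {}"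
  shows "par (par s1 s2) s3 = par s1 (par s2 s3)"
proof -
  have "fn (par (par s1 s2) s3) X = fn (par s1 (par s2 s3)) X" for X
  proof (cases "X \<in> Inputs (Ins s1 \<union> Ins s2 \<union> Ins s3)")
    case False
    then show ?thesis by (simp add: par_simps Un_assoc)
  next
    case True
    have "restrict X (Ins s1 \<union> Ins s2) \<in> Inputs (Ins s1 \<union> Ins s2)"
      "restrict X (Ins s2 \<union> Ins s3) \<in> Inputs (Ins s2 \<union> Ins s3)"
      using True by (auto intro: restrict_in_Inputs)
    moreover have "(Ins s1 \<union> Ins s2) \<inter> Ins s1 = Ins s1" "(Ins s1 \<union> Ins s2) \<inter> Ins s2 = Ins s2"
      "(Ins s2 \<union> Ins s3) \<inter> Ins s2 = Ins s2" "(Ins s2 \<union> Ins s3) \<inter> Ins s3 = Ins s3"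
      by blast+
    ultimately show ?thesis
      using True assms by (auto simp: par_simps Un_assoc fun_eq_iff)
  qed
  then show ?thesis unfolding par_def by (simp add: fun_eq_iff Un_assoc)
qed

lemma fixval_par:
  assumes s1: "causal_system s1" and s2: "causal_system s2" and disj: "lam s1 \<inter> lam s2 = {}"
    and i: "i \<in> Ins s1" and ou: "ou \<in> Outs s1" and X: "X \<in> Inputs (Ins s1 \<union> Ins s2 - {i})"
  shows "fixval (par s1 s2) i ou X = fixval s1 i ou (restrict X (Ins s1 - {i}))"
proof -
  define A where "A = fixval (par s1 s2) i ou X"
  have "A \<in> WO" "fn (par s1 s2) (X(i := A)) ou = A"
    using fixval_fixpoint[OF causal_system_par[OF s1 s2 disj]] i ou X
    unfolding A_def by (simp_all add: par_simps)
  moreover have "X(i := A) \<in> Inputs (Ins s1 \<union> Ins s2)"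
    using fun_upd_in_Inputs[OF X _ \<open>A \<in> WO\<close>] i by blast
  moreover have "restrict (X(i := A)) (Ins s1) = (restrict X (Ins s1 - {i}))(i := A)"
    using i by (auto simp: fun_eq_iff)
  ultimately have "fn s1 ((restrict X (Ins s1 - {i}))(i := A)) ou = A"
    using ou by (simp add: par_simps)
  then show ?thesis unfolding A_def[symmetric]
    using fixval_eqI[OF s1 i ou restrict_in_Inputs[OF X] \<open>A \<in> WO\<close>] by blast
qed

lemma par_gamma:
  assumes s1: "causal_system s1" and s2: "causal_system s2" and disj: "lam s1 \<inter> lam s2 = {}"
    and i: "i \<in> Ins s1" and ou: "ou \<in> Outs s1"
  shows "par (gamma s1 i ou) s2 = gamma (par s1 s2) i ou"
proof -
  have not2: "i \<notin> Ins s2" "ou \<notin> Outs s2" using disj i ou unfolding lam_def by auto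
  have I: "Ins s1 - {i} \<union> Ins s2 = Ins s1 \<union> Ins s2 - {i}" using not2 by blast
  have O: "Outs s1 - {ou} \<union> Outs s2 = Outs s1 \<union> Outs s2 - {ou}" using not2 by blast
  have "fn (par (gamma s1 i ou) s2) X = fn (gamma (par s1 s2) i ou) X" for X
  proof (cases "X \<in> Inputs (Ins s1 \<union> Ins s2 - {i})")
    case False
    then show ?thesis by (simp add: par_simps gamma_simps I)
  next
    case True
    define X1 where "X1 = restrict X (Ins s1 - {i})"
    define A where "A = fixval s1 i ou X1"
    have X1: "X1 \<in> Inputs (Ins s1 - {i})"
      unfolding X1_def using True by (rule restrict_in_Inputs) blast
    have fix_par: "fixval (par s1 s2) i ou X = A"
      unfolding A_def X1_def using fixval_par[OF s1 s2 disj i ou True] .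
    have XA: "X(i := A) \<in> Inputs (Ins s1 \<union> Ins s2)"
      using fun_upd_in_Inputs[OF True _ fixval_fixpoint(1)[OF s1 i ou X1]] i
      unfolding A_def by blast
    have r1: "restrict (X(i := A)) (Ins s1) = X1(i := A)"
      unfolding X1_def using i by (auto simp: fun_eq_iff)
    have r2: "restrict (X(i := A)) (Ins s2) = restrict X (Ins s2)"
      using not2 by (auto simp: fun_eq_iff)
    have "fn (par s1 s2) (X(i := A)) = (\<lambda>l. if l \<in> Outs s1 then fn s1 (X1(i := A)) l
        else if l \<in> Outs s2 then fn s2 (restrict X (Ins s2)) l else undefined)"
      using XA unfolding par_simps r1 r2 by simp
    then have R: "fn (gamma (par s1 s2) i ou) X = restrict (\<lambda>l.
          if l \<in> Outs s1 then fn s1 (X1(i := A)) l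
          else if l \<in> Outs s2 then fn s2 (restrict X (Ins s2)) l else undefined)
        (Outs s1 \<union> Outs s2 - {ou})"
      using True fix_par by (simp add: gamma_simps par_simps)
    have XG: "X \<in> Inputs (Ins (gamma s1 i ou) \<union> Ins s2)" using True I by (simp add: gamma_simps)
    have RG: "restrict X (Ins (gamma s1 i ou)) = X1" unfolding X1_def by (simp add: gamma_simps)
    have FG: "fn (gamma s1 i ou) X1 = restrict (fn s1 (X1(i := A))) (Outs s1 - {ou})"
      using X1 by (simp add: gamma_simps A_def)
    have "fn (par (gamma s1 i ou) s2) X = (\<lambda>l. if l \<in> Outs s1 - {ou}
        then restrict (fn s1 (X1(i := A))) (Outs s1 - {ou}) l
        else if l \<in> Outs s2 then fn s2 (restrict X (Ins s2)) l else undefined)"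
      using XG unfolding par_simps(3) RG FG gamma_simps(2) by simp
    then show ?thesis unfolding R using not2 by (auto simp: fun_eq_iff)
  qed
  then show ?thesis unfolding par_def gamma_def using I O by (simp add: fun_eq_iff)
qed

lemma fn_gamma_gamma:
  assumes s: "causal_system s" and i: "i \<in> Ins s" and ou: "ou \<in> Outs s"
    and i': "i' \<in> Ins s" "i' \<noteq> i" and o': "o' \<in> Outs s" "o' \<noteq> ou"
    and X: "X \<in> Inputs (Ins s - {i} - {i'})" and A: "A \<in> WO" and B: "B \<in> WO"
    and fixed: "fn s (X(i := A, i' := B)) ou = A" "fn s (X(i := A, i' := B)) o' = B"
  shows "fn (gamma (gamma s i ou) i' o') X
    = restrict (fn s (X(i := A, i' := B))) (Outs s - {ou} - {o'})"
proof -
  let ?s1 = "gamma s i ou"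
  have s1: "causal_system ?s1" using causal_system_gamma[OF s i ou] .
  have i1: "i' \<in> Ins ?s1" and o1: "o' \<in> Outs ?s1" using i' o' by (auto simp: gamma_simps)
  have X1: "X \<in> Inputs (Ins ?s1 - {i'})" using X by (simp add: gamma_simps)
  have XB: "X(i' := B) \<in> Inputs (Ins s - {i})"
    using fun_upd_in_Inputs[OF X1 i1 B] by (simp add: gamma_simps)
  have twist: "X(i' := B, i := A) = X(i := A, i' := B)" using i' by (simp add: fun_upd_twist)
  have "fixval s i ou (X(i' := B)) = A"
    using fixval_eqI[OF s i ou XB A] fixed(1) twist by simp
  then have fn_s1: "fn ?s1 (X(i' := B)) = restrict (fn s (X(i := A, i' := B))) (Outs s - {ou})"
    using XB twist by (simp add: gamma_simps)
  then have "fixval ?s1 i' o' X = B"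
    using fixval_eqI[OF s1 i1 o1 X1 B] fixed(2) o' by simp
  then have "fn (gamma ?s1 i' o') X = restrict (fn ?s1 (X(i' := B))) (Outs ?s1 - {o'})"
    using X1 by (simp add: gamma_simps)
  also have "\<dots> = restrict (fn s (X(i := A, i' := B))) (Outs s - {ou} - {o'})"
    unfolding fn_s1 by (auto simp: gamma_simps fun_eq_iff)
  finally show ?thesis .
qed

text \<open>The simultaneous fixed point is obtained by first connecting \<open>(i, ou)\<close>, then \<open>(i', o')\<close>.\<close>
lemma causal_system_joint_fixpoint:
  assumes s: "causal_system s" and i: "i \<in> Ins s" and ou: "ou \<in> Outs s"
    and i': "i' \<in> Ins s" "i' \<noteq> i" and o': "o' \<in> Outs s" "o' \<noteq> ou"
    and X: "X \<in> Inputs (Ins s - {i} - {i'})"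
  obtains A B where "A \<in> WO" "B \<in> WO"
    "fn s (X(i := A, i' := B)) ou = A" "fn s (X(i := A, i' := B)) o' = B"
proof -
  let ?s1 = "gamma s i ou"
  have s1: "causal_system ?s1" using causal_system_gamma[OF s i ou] .
  have i1: "i' \<in> Ins ?s1" and o1: "o' \<in> Outs ?s1" using i' o' by (auto simp: gamma_simps)
  have X1: "X \<in> Inputs (Ins ?s1 - {i'})" using X by (simp add: gamma_simps)
  define B where "B = fixval ?s1 i' o' X"
  have B: "B \<in> WO" "fn ?s1 (X(i' := B)) o' = B"
    using fixval_fixpoint[OF s1 i1 o1 X1] unfolding B_def by auto
  have XB: "X(i' := B) \<in> Inputs (Ins s - {i})"
    using fun_upd_in_Inputs[OF X1 i1 B(1)] by (simp add: gamma_simps)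
  define A where "A = fixval s i ou (X(i' := B))"
  have A: "A \<in> WO" "fn s (X(i' := B, i := A)) ou = A"
    using fixval_fixpoint[OF s i ou XB] unfolding A_def by auto
  have twist: "X(i' := B, i := A) = X(i := A, i' := B)" using i' by (simp add: fun_upd_twist)
  have "fn s (X(i := A, i' := B)) o' = B"
    using B(2) XB o' by (simp add: gamma_simps A_def[symmetric] twist)
  with A B twist show ?thesis using that by simp
qed

lemma gamma_commute:
  assumes s: "causal_system s" and i: "i \<in> Ins s" and ou: "ou \<in> Outs s"
    and i': "i' \<in> Ins s" "i' \<noteq> i" and o': "o' \<in> Outs s" "o' \<noteq> ou"
  shows "gamma (gamma s i ou) i' o' = gamma (gamma s i' o') i ou"
proof -
  have I: "Ins s - {i} - {i'} = Ins s - {i'} - {i}" by blast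
  have O: "Outs s - {ou} - {o'} = Outs s - {o'} - {ou}" by blast
  have "fn (gamma (gamma s i ou) i' o') X = fn (gamma (gamma s i' o') i ou) X" for X
  proof (cases "X \<in> Inputs (Ins s - {i} - {i'})")
    case False
    then show ?thesis by (simp add: gamma_simps I)
  next
    case True
    obtain A B where AB: "A \<in> WO" "B \<in> WO"
      "fn s (X(i := A, i' := B)) ou = A" "fn s (X(i := A, i' := B)) o' = B"
      using causal_system_joint_fixpoint[OF s i ou i' o' True] .
    have twist: "X(i' := B, i := A) = X(i := A, i' := B)" using i' by (simp add: fun_upd_twist)
    have X': "X \<in> Inputs (Ins s - {i'} - {i})" using True I by simp
    have "fn (gamma (gamma s i' o') i ou) X
        = restrict (fn s (X(i' := B, i := A))) (Outs s - {o'} - {ou})"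
      using fn_gamma_gamma[OF s i'(1) o'(1) i i'(2)[symmetric] ou o'(2)[symmetric] X' AB(2,1)]
        AB(3,4) twist by simp
    then show ?thesis
      using fn_gamma_gamma[OF s i ou i' o' True AB] twist O by simp
  qed
  then show ?thesis unfolding gamma_def using I O by (simp add: fun_eq_iff)
qed

lemma connection_well_defined_causal_systems: "connection_well_defined causal_systems"
  unfolding connection_well_defined_def causal_systems_def
  by (simp add: causal_system_ex1_fixpoint)

lemma Gam_par:
  assumes "lam s1 \<inter> lam s2 = {}"
  shows "i \<in> lam s1 \<Longrightarrow> ou \<in> lam s1 \<Longrightarrow> {i, ou} \<in> Gam (par s1 s2) \<longleftrightarrow> {i, ou} \<in> Gam s1"
    and "i \<in> lam s2 \<Longrightarrow> ou \<in> lam s2 \<Longrightarrow> {i, ou} \<in> Gam (par s1 s2) \<longleftrightarrow> {i, ou} \<in> Gam s2"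
  using assms unfolding Gam_iff lam_def by (auto simp: par_simps doubleton_eq_iff)

lemma causal_system_conn:
  assumes s: "causal_system s" and e: "e \<in> Gam s"
  shows "causal_system (conn s e)"
  using causal_system_gamma[OF s] by (metis Gam_conn_cases[OF s e])

lemma functional_system_algebra_causal_systems:
  "functional_system_algebra causal_systems lam Gam par conn"
  unfolding functional_system_algebra_def causal_systems_def
  by (simp add: causal_system_par causal_system_conn Gam_par)

lemma conn_commute:
  assumes s: "causal_system s" and e: "e \<in> Gam s" and e': "e' \<in> Gam (conn s e)"
  shows "e' \<in> Gam s" "e \<in> Gam (conn s e')" "conn (conn s e) e' = conn (conn s e') e"
proof -
  obtain i ou where io: "e = {i, ou}" "i \<in> Ins s" "ou \<in> Outs s" "conn s e = gamma s i ou"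
    using Gam_conn_cases[OF s e] .
  have s1: "causal_system (gamma s i ou)" using causal_system_gamma[OF s io(2,3)] .
  obtain i' o' where io': "e' = {i', o'}" "i' \<in> Ins s - {i}" "o' \<in> Outs s - {ou}"
    "conn (gamma s i ou) e' = gamma (gamma s i ou) i' o'"
    using Gam_conn_cases[OF s1] e' io(4) by (auto simp: gamma_simps)
  show "e' \<in> Gam s" using io' unfolding Gam_iff by blast
  have conn': "conn s e' = gamma s i' o'"
    using io' conn_doubleton[OF causal_system_disjoint[OF s]] by simp
  show "e \<in> Gam (conn s e')" using io io' unfolding conn' Gam_gamma by blast
  have s2: "causal_system (gamma s i' o')" using causal_system_gamma[OF s] io' by simp
  have "i \<in> Ins (gamma s i' o')" "ou \<in> Outs (gamma s i' o')"
    using io io' by (auto simp: gamma_simps)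
  then have "conn (conn s e') e = gamma (gamma s i' o') i ou"
    unfolding conn' io(1) by (rule conn_doubleton[OF causal_system_disjoint[OF s2]])
  then show "conn (conn s e) e' = conn (conn s e') e"
    using io(2-4) io' gamma_commute[OF s] by simp
qed

lemma par_conn:
  assumes s1: "causal_system s1" and s2: "causal_system s2" and disj: "lam s1 \<inter> lam s2 = {}"
    and e: "e \<in> Gam s1"
  shows "par (conn s1 e) s2 = conn (par s1 s2) e"
proof -
  obtain i ou where io: "e = {i, ou}" "i \<in> Ins s1" "ou \<in> Outs s1" "conn s1 e = gamma s1 i ou"
    using Gam_conn_cases[OF s1 e] .
  moreover have "conn (par s1 s2) e = gamma (par s1 s2) i ou"
    using io conn_doubleton[OF causal_system_disjoint[OF causal_system_par[OF s1 s2 disj]]]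
    by (simp add: par_simps)
  ultimately show ?thesis using par_gamma[OF s1 s2 disj] by simp
qed

lemma composition_order_invariant_causal_systems:
  "composition_order_invariant causal_systems lam Gam par conn"
  unfolding composition_order_invariant_def
proof (intro conjI ballI impI)
  fix s :: "('a, 'b) sys" and e e' assume "s \<in> causal_systems" "e \<in> Gam s" "e' \<in> Gam (conn s e)"
  then show "e' \<in> Gam s" "e \<in> Gam (conn s e')" "conn (conn s e) e' = conn (conn s e') e"
    using conn_commute unfolding causal_systems_iff by blast+
next
  fix s1 s2 s3 :: "('a, 'b) sys"
  assume "lam s1 \<inter> lam s2 = {} \<and> lam s1 \<inter> lam s3 = {} \<and> lam s2 \<inter> lam s3 = {}"
  then show "par (par s1 s2) s3 = par s1 (par s2 s3)" by (intro par_assoc) (auto simp: lam_def)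
next
  fix s1 s2 :: "('a, 'b) sys"
  assume "lam s1 \<inter> lam s2 = {}"
  then show "par s1 s2 = par s2 s1" by (intro par_commute) (auto simp: lam_def)
next
  fix s1 s2 :: "('a, 'b) sys" and e
  assume "s1 \<in> causal_systems" "s2 \<in> causal_systems" "e \<in> Gam s1" "lam s1 \<inter> lam s2 = {}"
  then show "par (conn s1 e) s2 = conn (par s1 s2) e"
    using par_conn unfolding causal_systems_iff by blast
qed

theorem theorem6p6:
  shows "connection_well_defined (causal_systems :: ('l, 'p::order) sys set) \<and>
         functional_system_algebra (causal_systems :: ('l, 'p::order) sys set) lam Gam par conn \<and>
         composition_order_invariant (causal_systems :: ('l, 'p::order) sys set) lam Gam par conn"
  using connection_well_defined_causal_systems functional_system_algebra_causal_systems
    composition_order_invariant_causal_systems by blast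

end
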